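(* Let $\Omega^{+}_{\mathrm{even}}$ (resp. $\Omega^-_{\mathrm{even}}$) be the set of $(b,a,c,|\xi|)\in R$ for which \[ 2\lambda_{\mathrm{even}}[a+c-(b+1)\beta^2]=5\beta(\beta-\lambda_{\mathrm{even}})(\lambda_{\mathrm{even}}-\beta b),\qquad \lambda_{\mathrm{even}}=\frac{5\beta(ab+c-2\beta^2b)}{a+c-(b+1)\beta^2}, \] holds with $\beta=\sqrt{\big(ab+c\pm\sqrt{(c-ab)^2+4|\xi|^2b}\big)/(2b)}$, the sign $+$ (resp. $-$) being used. Then $\Omega^\pm_{\mathrm{even}}$ are non-empty and unbounded, and if $(b,a,c,|\xi|)\in\Omega^\pm_{\mathrm{even}}$ then $(b,ra,rc,r|\xi|)\in\Omega^\pm_{\mathrm{even}}$ for every $r>0$.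
   Context: $R:=\{(b,a,c,|\xi|)\in\mathbb{R}^4: a,c>0,\ b\ge 1,\ 0\le|\xi|^2<ac\}$ parametrizes pairs $A=\begin{pmatrix}a&\xi\\\overline\xi&c\end{pmatrix}$, $B=\begin{pmatrix}1&0\\0&b\end{pmatrix}$ of positive definite matrices. Points considered are those for which the quantities above are defined (in particular $b>1$, $|\xi|>0$). *)

theory Defs
  imports "HOL-Analysis.Analysis"
begin

definition sgn_sel :: "bool \<Rightarrow> real" where
  "sgn_sel pl = (if pl then 1 else -1)"

text \<open>beta = sqrt((ab+c +- sqrt((c-ab)^2+4|xi|^2 b))/(2b)); x stands for |xi|.\<close>
definition beta_even :: "bool \<Rightarrow> real \<Rightarrow> real \<Rightarrow> real \<Rightarrow> real \<Rightarrow> real" where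
  "beta_even pl b a c x =
     sqrt ((a*b + c + sgn_sel pl * sqrt ((c - a*b)^2 + 4 * x^2 * b)) / (2*b))"

definition lambda_even :: "real \<Rightarrow> real \<Rightarrow> real \<Rightarrow> real \<Rightarrow> real" where
  "lambda_even bt b a c = 5 * bt * (a*b + c - 2 * bt^2 * b) / (a + c - (b+1) * bt^2)"

text \<open>Points (b,a,c,|xi|) of R at which all quantities are defined
  (b > 1, |xi| > 0, nonzero denominator) and the equation holds.\<close>
definition Omega_even :: "bool \<Rightarrow> (real \<times> real \<times> real \<times> real) set" where
  "Omega_even pl = {(b, a, c, x). a > 0 \<and> c > 0 \<and> b > 1 \<and> x > 0 \<and> x^2 < a * c \<and>
     (let bt = beta_even pl b a c x; lam = lambda_even bt b a c in
        a + c - (b+1) * bt^2 \<noteq> 0 \<and>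
        2 * lam * (a + c - (b+1) * bt^2) = 5 * bt * (bt - lam) * (lam - bt * b))}"

end

theory Submission
  imports Defs
begin

text \<open>Every quantity in the definition of \<open>\<Omega>\<^sup>\<plusminus>\<^sub>even\<close> is homogeneous in \<open>(a, c, |\<xi>|)\<close> for fixed \<open>b\<close>:
  scaling these by \<open>r = q\<^sup>2\<close> multiplies \<open>\<beta>\<close> and \<open>\<lambda>\<^sub>even\<close> by \<open>q\<close>, the denominator
  \<open>a + c - (b+1)\<beta>\<^sup>2\<close> by \<open>q\<^sup>2\<close> and both sides of the equation by \<open>q\<^sup>3\<close>. Hence \<open>\<Omega>\<^sup>\<plusminus>\<^sub>even\<close> is a cone
  in the last three coordinates, which makes it unbounded as soon as it is non-empty, and
  non-emptiness is witnessed by explicit rational points.\<close>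

lemma beta_even_scale:
  assumes "r \<ge> 0"
  shows "beta_even pl b (r*a) (r*c) (r*x) = sqrt r * beta_even pl b a c x"
proof -
  define d where "d = (c - a*b)^2 + 4*x^2*b"
  have "(r*c - r*a*b)^2 + 4*(r*x)^2*b = r^2 * d"
    unfolding d_def by (simp add: algebra_simps power2_eq_square)
  then have disc: "sqrt ((r*c - r*a*b)^2 + 4*(r*x)^2*b) = r * sqrt d"
    using assms by (simp add: real_sqrt_mult)
  have "beta_even pl b (r*a) (r*c) (r*x) = sqrt ((r*a*b + r*c + sgn_sel pl * (r * sqrt d)) / (2*b))"
    unfolding beta_even_def disc ..
  also have "\<dots> = sqrt (r * ((a*b + c + sgn_sel pl * sqrt d) / (2*b)))"
    by (simp add: algebra_simps)
  also have "\<dots> = sqrt r * beta_even pl b a c x"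
    unfolding beta_even_def d_def by (rule real_sqrt_mult)
  finally show ?thesis .
qed

lemma lambda_even_scale:
  "lambda_even (q*bt) b (q^2*a) (q^2*c) = q * lambda_even bt b a c"
proof (cases "q = 0")
  case True
  then show ?thesis by (simp add: lambda_even_def)
next
  case False
  have "lambda_even (q*bt) b (q^2*a) (q^2*c)
      = (q^3 * (5*bt*(a*b + c - 2*bt^2*b))) / (q^2 * (a + c - (b+1)*bt^2))"
    unfolding lambda_even_def by (simp add: algebra_simps power2_eq_square power3_eq_cube)
  also have "\<dots> = q * lambda_even bt b a c"
    unfolding lambda_even_def using False by (simp add: power2_eq_square power3_eq_cube)
  finally show ?thesis .
qed

lemma Omega_even_scale:
  assumes mem: "(b, a, c, x) \<in> Omega_even pl" and "r > 0"
  shows "(b, r*a, r*c, r*x) \<in> Omega_even pl"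
proof -
  define q where "q = sqrt r"
  have q: "q^2 = r" using \<open>r > 0\<close> by (simp add: q_def)
  define bt where "bt = beta_even pl b a c x"
  define lam where "lam = lambda_even bt b a c"
  define den where "den = a + c - (b+1) * bt^2"
  from mem have pos: "a > 0" "c > 0" "b > 1" "x > 0" "x^2 < a*c"
    and den: "den \<noteq> 0"
    and eq: "2 * lam * den = 5 * bt * (bt - lam) * (lam - bt * b)"
    unfolding Omega_even_def bt_def lam_def den_def by (auto simp: Let_def)
  have bt_scaled: "beta_even pl b (r*a) (r*c) (r*x) = q*bt"
    using beta_even_scale \<open>r > 0\<close> by (simp add: bt_def q_def)
  have lam_scaled: "lambda_even (q*bt) b (r*a) (r*c) = q*lam"
    using lambda_even_scale q lam_def by metis
  have den_scaled: "r*a + r*c - (b+1)*(q*bt)^2 = r * den"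
    unfolding den_def q[symmetric] by (simp add: algebra_simps power2_eq_square)
  have "2 * (q*lam) * (r*a + r*c - (b+1)*(q*bt)^2) = q^3 * (2 * lam * den)"
    unfolding den_scaled by (simp add: q[symmetric] power2_eq_square power3_eq_cube)
  also have "\<dots> = 5 * (q*bt) * (q*bt - q*lam) * (q*lam - q*bt * b)"
    unfolding eq by (simp add: algebra_simps power3_eq_cube)
  finally have eq_scaled: "2 * (q*lam) * (r*a + r*c - (b+1)*(q*bt)^2)
      = 5 * (q*bt) * (q*bt - q*lam) * (q*lam - q*bt * b)" .
  have "r*a + r*c - (b+1)*(q*bt)^2 \<noteq> 0"
    using den_scaled den \<open>r > 0\<close> by simp
  moreover have "(r*x)^2 < (r*a) * (r*c)"
    using pos(5) \<open>r > 0\<close> by (simp add: power_mult_distrib power2_eq_square algebra_simps)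
  ultimately show ?thesis
    unfolding Omega_even_def
    using pos eq_scaled \<open>r > 0\<close> bt_scaled lam_scaled by (simp add: Let_def)
qed

text \<open>The numbers \<open>\<beta>\<^sup>2\<close> are the eigenvalues of \<open>B\<^sup>-\<^sup>1A\<close>, so \<open>\<beta> = 1\<close> for one choice of sign iff
  \<open>det (A - B) = (a - 1)(c - b) - |\<xi>|\<^sup>2 = 0\<close>. Both witnesses below lie on this surface with \<open>b = 6\<close>.\<close>

lemma Omega_even_nonempty: "Omega_even pl \<noteq> {}"
proof (cases pl)
  case True
  have "sqrt ((123/40 - 27/40*6)^2 + 4*(39/40)^2*6) = (195/40::real)"
    by (rule real_sqrt_unique) (auto simp: power2_eq_square)
  then have "beta_even pl 6 (27/40) (123/40) (39/40) = 1"
    unfolding beta_even_def using True by (simp add: sgn_sel_def mult.commute)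
  then have "(6, 27/40, 123/40, 39/40) \<in> Omega_even pl"
    unfolding Omega_even_def by (simp add: Let_def lambda_even_def power2_eq_square)
  then show ?thesis by blast
next
  case False
  have "sqrt ((3081/440 - 449/440*6)^2 + 4*(63/440)^2*6) = (495/440::real)"
    by (rule real_sqrt_unique) (auto simp: power2_eq_square)
  then have "beta_even pl 6 (449/440) (3081/440) (63/440) = 1"
    unfolding beta_even_def using False by (simp add: sgn_sel_def mult.commute)
  then have "(6, 449/440, 3081/440, 63/440) \<in> Omega_even pl"
    unfolding Omega_even_def by (simp add: Let_def lambda_even_def power2_eq_square)
  then show ?thesis by blast
qed

lemma not_bounded_if_contains_ray:
  fixes u :: "'a::real_normed_vector" and v :: "'b::real_normed_vector"
  assumes "v \<noteq> 0" and ray: "\<And>r. r > 0 \<Longrightarrow> (u, r *\<^sub>R v) \<in> S"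
  shows "\<not> bounded S"
proof
  assume "bounded S"
  then obtain B where B: "\<And>y. y \<in> S \<Longrightarrow> norm y \<le> B"
    unfolding bounded_iff by blast
  define r where "r = (\<bar>B\<bar> + 1) / norm v"
  have "r > 0" using \<open>v \<noteq> 0\<close> by (simp add: r_def)
  have "\<bar>B\<bar> + 1 = norm (r *\<^sub>R v)"
    using \<open>v \<noteq> 0\<close> \<open>r > 0\<close> by (simp add: r_def)
  also have "\<dots> \<le> norm (u, r *\<^sub>R v)"
    by (metis norm_snd_le snd_conv)
  also have "\<dots> \<le> B"
    using B ray \<open>r > 0\<close> by blast
  finally show False by simp
qed

theorem mainTheorem8:
  fixes pl :: bool
  shows "Omega_even pl \<noteq> {} \<and> \<not> bounded (Omega_even pl) \<and>
    (\<forall>b a c x r. (b, a, c, x) \<in> Omega_even pl \<longrightarrow> r > 0 \<longrightarrow>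
        (b, r*a, r*c, r*x) \<in> Omega_even pl)"
proof -
  obtain b a c x where mem: "(b, a, c, x) \<in> Omega_even pl"
    using Omega_even_nonempty by fast
  then have "(a, c, x) \<noteq> 0"
    by (auto simp: Omega_even_def zero_prod_def)
  moreover have "(b, r *\<^sub>R (a, c, x)) \<in> Omega_even pl" if "r > 0" for r
    using Omega_even_scale[OF mem that] by simp
  ultimately have "\<not> bounded (Omega_even pl)"
    by (rule not_bounded_if_contains_ray)
  then show ?thesis
    using Omega_even_nonempty Omega_even_scale by blast
qed

end
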